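(* Let $G$ be a connected graph with adjacency matrix $A$, $d=A\mathbf 1$, $D=\mathrm{diag}(d)$, $P=D^{-1}A$, let $e=(i,j)$, $i\ne j$, $a_{ij}>0$, be an edge that is not a cut-edge, $v=e_i-e_j$, $\widehat A=A+a_{ij}vv^T$, $\widehat P=D^{-1}\widehat A$ and $c(e)=K(\widehat P)-K(P)$. Define \[ W^{-1}=I-D^{-1/2}AD^{-1/2}+\frac{1}{\|d\|_1}D^{1/2}\mathbf 1\mathbf 1^TD^{1/2},\qquad \widehat W^{-1}=W^{-1}-a_{ij}D^{-1/2}vv^TD^{-1/2} \] (both matrices are invertible). Then \[ c(e)=a_{ij}\,v^TD^{-1/2}W\widehat WD^{-1/2}v, \] and moreover $1-a_{ij}v^TD^{-1/2}WD^{-1/2}v\ne 0$ and $\widehat W=W-\tau a_{ij}WD^{-1/2}vv^TD^{-1/2}W$ with $\tau=-1/(1-a_{ij}v^TD^{-1/2}WD^{-1/2}v)$.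
   Context: Graphs are undirected and possibly weighted on vertex set $\{1,\dots,n\}$, with symmetric nonnegative adjacency matrix $A=(a_{k\ell})$; $d=A\mathbf 1$ (all entries assumed positive); $\|d\|_1=\sum_k d_k$; $D^{\pm1/2}=\mathrm{diag}(d_k^{\pm1/2})$; $e_k$ is the $k$-th column of the identity and $\mathbf 1$ the all-ones vector. For an irreducible row-stochastic matrix $Q$ with stationary vector $\pi$, the Kemeny constant is $K(Q)=\sum_j\pi_j m_{kj}$, where $m_{kj}$ is the expected first passage time from $k$ to $j$ ($m_{kk}=0$), independent of $k$; equivalently $K(Q)=\sum_{\ell=2}^n 1/(1-\lambda_\ell)$, where $1=\lambda_1,\lambda_2,\dots,\lambda_n$ are the eigenvalues of $Q$. The edge $e$ is a cut-edge if the graph obtained by deleting $e$ is disconnected. *)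

theory Defs
  imports "HOL-Analysis.Analysis" "HOL-Computational_Algebra.Fundamental_Theorem_Algebra"
begin

definition unit_vec :: "'n::finite \<Rightarrow> real^'n" where
  "unit_vec k = (\<chi> l. if l = k then 1 else 0)"

definition ones :: "real^'n::finite" where
  "ones = (\<chi> l. 1)"

definition diag_mat :: "real^'n::finite \<Rightarrow> real^'n^'n" where
  "diag_mat x = (\<chi> k l. if k = l then x $ k else 0)"

definition outer :: "real^'n::finite \<Rightarrow> real^'n \<Rightarrow> real^'n^'n" where
  "outer x y = (\<chi> k l. x $ k * y $ l)"

definition degvec :: "real^'n^'n \<Rightarrow> real^'n::finite" where
  "degvec A = A *v ones"

definition edge_rel :: "real^'n^'n \<Rightarrow> ('n \<times> 'n) set" where
  "edge_rel A = {(k, l). A $ k $ l > 0}"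

definition graph_connected :: "real^'n::finite^'n \<Rightarrow> bool" where
  "graph_connected A \<longleftrightarrow> (\<forall>k l. (k, l) \<in> (edge_rel A)\<^sup>*)"

definition delete_edge :: "real^'n^'n \<Rightarrow> 'n \<Rightarrow> 'n \<Rightarrow> real^'n^'n" where
  "delete_edge A i j = (\<chi> k l. if (k = i \<and> l = j) \<or> (k = j \<and> l = i) then 0 else A $ k $ l)"

definition cut_edge :: "real^'n::finite^'n \<Rightarrow> 'n \<Rightarrow> 'n \<Rightarrow> bool" where
  "cut_edge A i j \<longleftrightarrow> \<not> graph_connected (delete_edge A i j)"

definition char_poly_c :: "real^'n::finite^'n \<Rightarrow> complex poly" where
  "char_poly_c Q = det (\<chi> k l. (if k = l then [:0, 1:] else 0) - [: complex_of_real (Q $ k $ l) :])"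

definition eigenvalues_c :: "real^'n::finite^'n \<Rightarrow> complex multiset" where
  "eigenvalues_c Q = proots (char_poly_c Q)"

text \<open>Kemeny constant K(Q) = sum over lambda_2..lambda_n of 1/(1 - lambda), where
  lambda_1 = 1 is removed once from the eigenvalue multiset.\<close>
definition kemeny :: "real^'n::finite^'n \<Rightarrow> complex" where
  "kemeny Q = (\<Sum>z\<in># (eigenvalues_c Q - {#1#}). 1 / (1 - z))"

end

theory Submission
  imports Defs
begin

text \<open>
  Let S = D^(-1/2) A D^(-1/2) and u = D^(1/2) 1 / sqrt(||d||_1), so that S is symmetric, S u = u and
  W^(-1) = I - S + u u^T. As the graph is connected, the eigenvalue 1 of S is simple (a harmonic
  function on a connected graph is constant). Hence W^(-1) has the eigenvalue 1 on u and 1 - lambda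
  on the other eigenvectors of S, and since P = D^(-1/2) S D^(1/2) has the spectrum of S,
  K(P) = trace W - 1.

  The matrix A + a_ij v v^T is the graph with the edge ij replaced by loops of weight a_ij at i and j:
  degrees are unchanged and, e not being a cut-edge, it is still connected. Its matrix hat W^(-1) is
  W^(-1) - a_ij x x^T with x = D^(-1/2) v, so the resolvent identity gives
  c(e) = trace hat W - trace W = a_ij x^T W hat W x, and the Sherman-Morrison formula gives hat W.
\<close>

lemma diag_mat_matrix_mult_nth: "(diag_mat x ** (M::real^'m^'n::finite)) $ k $ l = x $ k * M $ k $ l"
proof -
  have "(diag_mat x ** M) $ k $ l = (\<Sum>m\<in>UNIV. if m = k then x $ k * M $ k $ l else 0)"
    unfolding matrix_matrix_mult_def diag_mat_def vec_lambda_beta by (intro sum.cong) auto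
  thus ?thesis by simp
qed

lemma matrix_mult_diag_mat_nth: "((M::real^'n::finite^'m) ** diag_mat x) $ k $ l = M $ k $ l * x $ l"
proof -
  have "(M ** diag_mat x) $ k $ l = (\<Sum>m\<in>UNIV. if m = l then M $ k $ l * x $ l else 0)"
    unfolding matrix_matrix_mult_def diag_mat_def vec_lambda_beta by (intro sum.cong) auto
  thus ?thesis by simp
qed

lemma transpose_diag_mat [simp]: "transpose (diag_mat x) = diag_mat (x::real^'n::finite)"
  by (simp add: vec_eq_iff transpose_def diag_mat_def)

lemma outer_mult_vec: "outer x y *v (w::real^'n::finite) = (y \<bullet> w) *\<^sub>R x"
  by (simp add: vec_eq_iff outer_def matrix_vector_mult_def inner_vec_def sum_distrib_left algebra_simps)

lemma matrix_add_rdistrib: "((B::'a::semiring_1^'m::finite^'n) + C) ** A = B ** A + C ** A"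
  by (simp add: vec_eq_iff matrix_matrix_mult_def sum.distrib algebra_simps)

lemma matrix_diff_ldistrib: "(A::'a::ring_1^'m::finite^'n) ** (B - C) = A ** B - A ** C"
  by (simp add: vec_eq_iff matrix_matrix_mult_def sum_subtractf algebra_simps)

lemma matrix_diff_rdistrib: "((B::'a::ring_1^'m::finite^'n) - C) ** A = B ** A - C ** A"
  by (simp add: vec_eq_iff matrix_matrix_mult_def sum_subtractf algebra_simps)

lemma column_matrix_mult: "column l (A ** B) = A *v column l (B::'a::semiring_1^'k^'m::finite)"
  by (simp add: vec_eq_iff column_def matrix_matrix_mult_def matrix_vector_mult_def)

lemma column_matrix_mult_diag_mat: "column l (M ** diag_mat x) = x $ l *\<^sub>R column l (M::real^'n::finite^'m)"
  by (simp add: vec_eq_iff column_def matrix_mult_diag_mat_nth mult.commute)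

lemma matrix_eq_columns: "A = B \<longleftrightarrow> (\<forall>l. column l A = column l (B::'a^'n^'m))"
  by (auto simp: vec_eq_iff column_def)

lemma trace_scaleR: "trace (c *\<^sub>R (M::real^'n::finite^'n)) = c * trace M"
  by (simp add: trace_def sum_distrib_left)

lemma trace_outer_mult: "trace (outer x y ** (Z::real^'n::finite^'n)) = y \<bullet> (Z *v x)"
proof -
  have "trace (outer x y ** Z) = (\<Sum>k\<in>UNIV. \<Sum>m\<in>UNIV. x $ k * y $ m * Z $ m $ k)"
    by (simp add: trace_def matrix_matrix_mult_def outer_def)
  also have "\<dots> = y \<bullet> (Z *v x)"
    by (subst sum.swap) (simp add: inner_vec_def matrix_vector_mult_def sum_distrib_left algebra_simps)
  finally show ?thesis .
qed

lemma trace_orthogonal_conj_diag_mat: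
  assumes "orthogonal_matrix Q"
  shows "trace (Q ** diag_mat x ** transpose Q) = (\<Sum>l\<in>UNIV. x $ (l::'n::finite))"
proof -
  have "trace (Q ** diag_mat x ** transpose Q) = trace (diag_mat x ** (transpose Q ** Q))"
    by (metis trace_mul_sym matrix_mul_assoc)
  also have "\<dots> = (\<Sum>l\<in>UNIV. x $ l)"
    using assms by (simp add: orthogonal_matrix trace_def diag_mat_def)
  finally show ?thesis .
qed

lemma symmetric_matrix_inner_commute:
  fixes S :: "real^'n::finite^'n"
  assumes "transpose S = S"
  shows "x \<bullet> (S *v y) = (S *v x) \<bullet> y"
  by (metis assms dot_lmul_matrix vector_transpose_matrix)

lemma quadratic_form_congruence:
  fixes D Z :: "real^'n::finite^'n"
  assumes "transpose D = D"
  shows "v \<bullet> ((D ** Z ** D) *v v) = (D *v v) \<bullet> (Z *v (D *v v))"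
  by (simp add: symmetric_matrix_inner_commute[OF assms] flip: matrix_vector_mul_assoc)

lemma outer_congruence:
  fixes D :: "real^'n::finite^'n"
  assumes "transpose D = D"
  shows "D ** outer v v ** D = outer (D *v v) (D *v v)"
proof -
  have "(D ** outer v v ** D) *v w = outer (D *v v) (D *v v) *v w" for w
    by (simp add: outer_mult_vec symmetric_matrix_inner_commute[OF assms] matrix_vector_mult_scaleR
        flip: matrix_vector_mul_assoc)
  thus ?thesis by (simp add: matrix_eq)
qed

lemma matrix_inv_unique:
  fixes A B :: "real^'n::finite^'n"
  assumes AB: "A ** B = mat 1"
  shows "matrix_inv A = B"
proof -
  have ex: "\<exists>A'. A ** A' = mat 1 \<and> A' ** A = mat 1"
    using AB matrix_left_right_inverse by blast
  have "matrix_inv A = matrix_inv A ** (A ** B)" using AB by simp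
  also have "\<dots> = B"
    using someI_ex[OF ex] by (simp add: matrix_inv_def matrix_mul_assoc)
  finally show ?thesis .
qed

lemma matrix_inv_inverse:
  fixes A :: "real^'n::finite^'n"
  assumes "invertible A"
  shows "A ** matrix_inv A = mat 1" "matrix_inv A ** A = mat 1"
  using assms matrix_inv_unique matrix_left_right_inverse by (metis invertible_def)+

lemma invertible_mult_vec_eq_0:
  fixes A :: "real^'n::finite^'n"
  assumes "invertible A" "A *v y = 0"
  shows "y = 0"
  by (metis assms matrix_inv_inverse(2) matrix_vector_mul_assoc matrix_vector_mul_lid
      matrix_vector_mult_0_right)

lemma matrix_inv_diff:
  fixes A B :: "real^'n::finite^'n"
  assumes A: "invertible A" and B: "invertible B"
  shows "matrix_inv B - matrix_inv A = matrix_inv B ** (A - B) ** matrix_inv A"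
  by (simp add: matrix_diff_ldistrib matrix_diff_rdistrib matrix_inv_inverse[OF A]
      matrix_inv_inverse[OF B] flip: matrix_mul_assoc)

section \<open>Spectral theorem for symmetric matrices\<close>

lemma linear_le_quadratic_imp_zero:
  fixes c L :: real
  assumes le: "\<And>t. t * c \<le> t\<^sup>2 * L"
  shows "c = 0"
proof -
  define p where "p = \<bar>L\<bar> + 1"
  have p: "p > 0" "1 \<le> p - L" by (auto simp: p_def)
  have "(c / p) * c * p\<^sup>2 \<le> (c / p)\<^sup>2 * L * p\<^sup>2"
    by (rule mult_right_mono[OF le]) simp
  also have "(c / p) * c * p\<^sup>2 = c\<^sup>2 * p"
    using p by (simp add: power2_eq_square)
  also have "(c / p)\<^sup>2 * L * p\<^sup>2 = c\<^sup>2 * L"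
    using p by (simp add: power_divide)
  finally have "c\<^sup>2 * (p - L) \<le> 0" by (simp add: right_diff_distrib)
  moreover have "c\<^sup>2 * 1 \<le> c\<^sup>2 * (p - L)"
    using p(2) by (rule mult_left_mono) simp
  ultimately have "c\<^sup>2 \<le> 0" by linarith
  thus ?thesis by simp
qed

lemma rayleigh_maximizer_is_eigenvector:
  fixes S :: "real^'n::finite^'n"
  assumes sym: "transpose S = S" and V: "subspace V" and inv: "\<And>y. y \<in> V \<Longrightarrow> S *v y \<in> V"
    and x: "x \<in> V" "norm x = 1"
    and max: "\<And>w. w \<in> V \<Longrightarrow> w \<bullet> (S *v w) \<le> (x \<bullet> (S *v x)) * (w \<bullet> w)"
  shows "S *v x = (x \<bullet> (S *v x)) *\<^sub>R x"
proof -
  define M where "M = x \<bullet> (S *v x)"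
  define z where "z = S *v x - M *\<^sub>R x"
  have xx: "x \<bullet> x = 1" using x(2) by (simp add: norm_eq_1)
  have zV: "z \<in> V" using inv x V by (simp add: z_def subspace_diff subspace_scale)
  have "x \<bullet> z = 0" using xx by (simp add: z_def M_def inner_diff_right)
  hence zx: "z \<bullet> x = 0" by (simp add: inner_commute)
  have "t * (2 * (z \<bullet> (S *v x))) \<le> t\<^sup>2 * (M * (z \<bullet> z) - z \<bullet> (S *v z))" for t
  proof -
    have "x + t *\<^sub>R z \<in> V" using x zV V by (simp add: subspace_add subspace_scale)
    from max[OF this] have
      "M + 2 * t * (z \<bullet> (S *v x)) + t\<^sup>2 * (z \<bullet> (S *v z)) \<le> M * (1 + t\<^sup>2 * (z \<bullet> z))"
      using symmetric_matrix_inner_commute[OF sym, of x z] xx zx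
      by (simp add: M_def matrix_vector_right_distrib matrix_vector_mult_scaleR inner_add_left
          inner_add_right inner_commute power2_eq_square algebra_simps)
    thus ?thesis by (simp add: algebra_simps)
  qed
  hence "z \<bullet> (S *v x) = 0" using linear_le_quadratic_imp_zero by fastforce
  hence "z \<bullet> z = 0" using zx by (simp add: z_def inner_diff_right)
  thus ?thesis by (simp add: z_def M_def)
qed

lemma symmetric_matrix_eigenvector_in_invariant_subspace:
  fixes S :: "real^'n::finite^'n"
  assumes sym: "transpose S = S" and V: "subspace V" and inv: "\<And>y. y \<in> V \<Longrightarrow> S *v y \<in> V"
    and y: "y \<in> V" "y \<noteq> 0"
  obtains x where "x \<in> V" "norm x = 1" "S *v x = (x \<bullet> (S *v x)) *\<^sub>R x"
proof -
  define K where "K = V \<inter> sphere 0 1"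
  have "compact K"
    unfolding K_def using closed_subspace[OF V] by (simp add: closed_Int_compact)
  moreover have "(1 / norm y) *\<^sub>R y \<in> K"
    using y V by (simp add: K_def subspace_scale)
  moreover have "continuous_on K (\<lambda>w. w \<bullet> (S *v w))"
    by (intro continuous_intros linear_continuous_on linear_conv_bounded_linear[THEN iffD1]
        matrix_vector_mul_linear)
  ultimately obtain x where x: "x \<in> K" and xmax: "\<And>w. w \<in> K \<Longrightarrow> w \<bullet> (S *v w) \<le> x \<bullet> (S *v x)"
    using continuous_attains_sup[of K "\<lambda>w. w \<bullet> (S *v w)"] by blast
  have "w \<bullet> (S *v w) \<le> (x \<bullet> (S *v x)) * (w \<bullet> w)" if w: "w \<in> V" for w
  proof (cases "w = 0")
    case False
    have "(1 / norm w) *\<^sub>R w \<in> K" using w False V by (simp add: K_def subspace_scale)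
    from xmax[OF this] have "(w \<bullet> (S *v w)) / (norm w)\<^sup>2 \<le> x \<bullet> (S *v x)"
      by (simp add: matrix_vector_mult_scaleR power2_eq_square)
    thus ?thesis using False by (simp add: power2_norm_eq_inner divide_le_eq mult.commute)
  qed simp
  moreover have "x \<in> V" "norm x = 1" using x by (auto simp: K_def)
  ultimately show thesis
    using rayleigh_maximizer_is_eigenvector[OF sym V inv] that by blast
qed

lemma symmetric_matrix_eigenvector_orthogonal:
  fixes S :: "real^'n::finite^'n"
  assumes sym: "transpose S = S" and eig: "\<And>e. e \<in> E \<Longrightarrow> S *v e = (e \<bullet> (S *v e)) *\<^sub>R e"
    and dim: "dim E < CARD('n)"
  obtains x where "norm x = 1" "S *v x = (x \<bullet> (S *v x)) *\<^sub>R x" "\<And>e. e \<in> E \<Longrightarrow> orthogonal e x"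
proof -
  obtain y where y: "y \<noteq> 0" "\<And>w. w \<in> span E \<Longrightarrow> orthogonal y w"
    using orthogonal_to_subspace_exists[of E] dim by (auto simp: DIM_cart)
  define V where "V = {w. \<forall>e\<in>E. orthogonal e w}"
  have V: "subspace V" unfolding V_def by (rule subspace_orthogonal_to_vectors)
  have "y \<in> V" using y(2) span_base by (auto simp: V_def orthogonal_commute)
  moreover have "S *v w \<in> V" if "w \<in> V" for w
  proof -
    have "e \<bullet> (S *v w) = 0" if e: "e \<in> E" for e
    proof -
      have "e \<bullet> (S *v w) = (S *v e) \<bullet> w" by (rule symmetric_matrix_inner_commute[OF sym])
      also have "\<dots> = (e \<bullet> (S *v e)) * (e \<bullet> w)" using eig[OF e] by (metis inner_scaleR_left)
      also have "e \<bullet> w = 0" using \<open>w \<in> V\<close> e by (simp add: V_def orthogonal_def)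
      finally show ?thesis by simp
    qed
    thus ?thesis by (simp add: V_def orthogonal_def)
  qed
  ultimately obtain x where "x \<in> V" "norm x = 1" "S *v x = (x \<bullet> (S *v x)) *\<^sub>R x"
    using symmetric_matrix_eigenvector_in_invariant_subspace[OF sym V] y(1) by blast
  thus thesis using that by (simp add: V_def)
qed

lemma symmetric_matrix_orthonormal_eigenvectors:
  fixes S :: "real^'n::finite^'n"
  assumes sym: "transpose S = S" and u: "norm u = 1" "S *v u = (u \<bullet> (S *v u)) *\<^sub>R u"
  obtains E where "u \<in> E" "pairwise orthogonal E" "card E = CARD('n)"
    "\<And>e. e \<in> E \<Longrightarrow> norm e = 1 \<and> S *v e = (e \<bullet> (S *v e)) *\<^sub>R e"
proof -
  define good where "good E \<longleftrightarrow> u \<in> E \<and> pairwise orthogonal E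
      \<and> (\<forall>e\<in>E. norm e = 1 \<and> S *v e = (e \<bullet> (S *v e)) *\<^sub>R e)" for E :: "(real^'n) set"
  have bounded: "independent E \<and> finite E \<and> card E \<le> CARD('n)" if "good E" for E
  proof -
    have "independent E"
      using that pairwise_orthogonal_independent by (force simp: good_def)
    thus ?thesis using independent_bound[of E] by (simp add: DIM_cart)
  qed
  have "good {u}" using u by (simp add: good_def)
  moreover have "\<forall>E. good E \<longrightarrow> card E < CARD('n) + 1" using bounded by (simp add: less_Suc_eq_le)
  ultimately obtain E where E: "good E" and Emax: "\<And>F. good F \<Longrightarrow> card F \<le> card E"
    using ex_has_greatest_nat[of good "{u}" card "CARD('n) + 1"] by blast
  have "card E = CARD('n)"
  proof (rule ccontr)
    assume "card E \<noteq> CARD('n)"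
    hence "dim E < CARD('n)" using bounded[OF E] by (simp add: dim_eq_card_independent)
    then obtain x where x: "norm x = 1" "S *v x = (x \<bullet> (S *v x)) *\<^sub>R x"
        "\<And>e. e \<in> E \<Longrightarrow> orthogonal e x"
      using symmetric_matrix_eigenvector_orthogonal[OF sym, of E] E by (auto simp: good_def)
    have "x \<notin> E" using x(1,3) by (force simp: orthogonal_def)
    moreover have "good (insert x E)"
      using E x by (auto simp: good_def pairwise_insert orthogonal_commute)
    ultimately show False using Emax[of "insert x E"] bounded[OF E] by simp
  qed
  thus thesis using E that by (auto simp: good_def)
qed

lemma symmetric_matrix_diagonalization:
  fixes S :: "real^'n::finite^'n"
  assumes sym: "transpose S = S" and u: "norm u = 1" "S *v u = c *\<^sub>R u"
  obtains Q lam k where "orthogonal_matrix Q" "S ** Q = Q ** diag_mat lam" "column k Q = u" "lam $ k = c"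
proof -
  have "u \<bullet> (S *v u) = c" using u by (simp add: norm_eq_1)
  then obtain E where E: "u \<in> E" "pairwise orthogonal E" "card E = CARD('n)"
      and eig: "\<And>e. e \<in> E \<Longrightarrow> norm e = 1 \<and> S *v e = (e \<bullet> (S *v e)) *\<^sub>R e"
    using symmetric_matrix_orthonormal_eigenvectors[OF sym u(1)] u(2) by metis
  have "finite E" using E(1,3) card_gt_0_iff by fastforce
  then obtain g where g: "bij_betw g (UNIV::'n set) E"
    using finite_same_card_bij[of "UNIV::'n set" E] E(3) by auto
  then obtain k where k: "g k = u"
    using E(1) by (metis bij_betw_inv_into_right bij_betw_inv_into UNIV_I bij_betwE)
  define Q where "Q = (\<chi> r l. g l $ r)"
  define lam where "lam = (\<chi> l. g l \<bullet> (S *v g l))"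
  have col: "column l Q = g l" for l by (simp add: Q_def column_def vec_eq_iff)
  have gE: "g l \<in> E" for l using g bij_betwE by blast
  have "orthogonal (g i) (g j)" if "i \<noteq> j" for i j
    using that E(2) gE g by (metis UNIV_I bij_betw_imp_inj_on inj_on_def pairwise_def)
  hence "orthogonal_matrix Q"
    by (simp add: orthogonal_matrix_orthonormal_columns col eig gE)
  moreover have "S ** Q = Q ** diag_mat lam"
  proof -
    have "(S ** Q) $ r $ l = (S *v g l) $ r" for r l
      by (simp add: Q_def matrix_matrix_mult_def matrix_vector_mult_def)
    also have "(S *v g l) $ r = (Q ** diag_mat lam) $ r $ l" for r l
    proof -
      have "S *v g l = lam $ l *\<^sub>R g l" using eig[OF gE] by (simp add: lam_def)
      thus ?thesis by (simp add: matrix_mult_diag_mat_nth Q_def)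
    qed
    finally show ?thesis by (simp add: vec_eq_iff)
  qed
  moreover have "lam $ k = c" using \<open>u \<bullet> (S *v u) = c\<close> k by (simp add: lam_def)
  ultimately show thesis using that col k by blast
qed

section \<open>Kemeny constant of a symmetrizable matrix\<close>

definition const_poly_mat :: "real^'m^'n \<Rightarrow> complex poly^'m^'n" where
  "const_poly_mat M = (\<chi> k l. [:complex_of_real (M $ k $ l):])"

lemma const_poly_mat_mult:
  "const_poly_mat ((A::real^'m::finite^'n) ** (B::real^'k^'m)) = const_poly_mat A ** const_poly_mat B"
  by (simp add: vec_eq_iff const_poly_mat_def matrix_matrix_mult_def sum_to_poly mult_to_poly mult.commute)

lemma const_poly_mat_id: "const_poly_mat (mat 1 :: real^'n^'n) = mat 1"
  by (simp add: vec_eq_iff const_poly_mat_def mat_def one_pCons)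

lemma char_poly_c_eq_det: "char_poly_c M = det (mat [:0, 1:] - const_poly_mat M)"
  unfolding char_poly_c_def const_poly_mat_def mat_def by (rule arg_cong[where f = det]) vector

lemma matrix_mult_mat_commute: "(A::'a::comm_semiring_1^'n::finite^'n) ** mat c = mat c ** A"
proof -
  have "(A ** mat c) $ k $ l = A $ k $ l * c" "(mat c ** A) $ k $ l = c * A $ k $ l" for k l
    unfolding matrix_matrix_mult_def mat_def vec_lambda_beta
    by (simp_all add: if_distrib[of "\<lambda>x. A $ k $ _ * x"] if_distrib[of "\<lambda>x. x * A $ _ $ l"] cong: if_cong)
  thus ?thesis by (simp add: vec_eq_iff mult.commute)
qed

lemma char_poly_c_similar:
  fixes U V L :: "real^'n::finite^'n"
  assumes UV: "U ** V = mat 1"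
  shows "char_poly_c (U ** L ** V) = char_poly_c L"
proof -
  let ?X = "mat [:0, 1:] :: complex poly^'n^'n" and ?C = const_poly_mat
  have "?C U ** ?X ** ?C V = ?X ** ?C (U ** V)"
    by (simp add: matrix_mult_mat_commute const_poly_mat_mult matrix_mul_assoc)
  hence "?X - ?C (U ** L ** V) = ?C U ** ?X ** ?C V - ?C U ** ?C L ** ?C V"
    by (simp add: UV const_poly_mat_id const_poly_mat_mult)
  also have "\<dots> = ?C U ** (?X - ?C L) ** ?C V"
    by (simp add: vec_eq_iff matrix_matrix_mult_def sum_subtractf algebra_simps)
  finally have "det (?X - ?C (U ** L ** V)) = det (?C U) * det (?C V) * det (?X - ?C L)"
    by (simp add: det_mul)
  moreover have "det (?C U) * det (?C V) = 1"
    by (metis UV det_I det_mul const_poly_mat_id const_poly_mat_mult)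
  ultimately show ?thesis by (simp add: char_poly_c_eq_det)
qed

lemma char_poly_c_diag_mat:
  "char_poly_c (diag_mat (x::real^'n::finite)) = (\<Prod>k\<in>UNIV. [:- complex_of_real (x $ k), 1:])"
  unfolding char_poly_c_eq_det
  by (subst det_diagonal) (simp_all add: mat_def const_poly_mat_def diag_mat_def)

lemma kemeny_similar_diag_mat:
  fixes U V :: "real^'n::finite^'n"
  assumes UV: "U ** V = mat 1" and k: "lam $ k = 1"
  shows "kemeny (U ** diag_mat lam ** V) = complex_of_real (\<Sum>l\<in>UNIV - {k}. 1 / (1 - lam $ l))"
proof -
  define c where "c = (\<lambda>l. complex_of_real (lam $ l))"
  have "eigenvalues_c (U ** diag_mat lam ** V) = image_mset c (mset_set UNIV)"
    unfolding eigenvalues_c_def char_poly_c_similar[OF UV] char_poly_c_diag_mat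
    by (subst proots_prod) (simp_all add: c_def sum_unfold_sum_mset)
  also have "\<dots> = add_mset 1 (image_mset c (mset_set (UNIV - {k})))"
    by (subst mset_set.remove[of UNIV k]) (simp_all add: c_def k)
  finally have "kemeny (U ** diag_mat lam ** V) = (\<Sum>l\<in>UNIV - {k}. 1 / (1 - c l))"
    by (simp add: kemeny_def sum_unfold_sum_mset multiset.map_comp o_def)
  thus ?thesis by (simp add: c_def)
qed

lemma orthogonal_diagonalization_inverse:
  fixes M Q :: "real^'n::finite^'n"
  assumes Q: "orthogonal_matrix Q" and MQ: "M ** Q = Q ** diag_mat mu" and mu: "\<And>l. mu $ l \<noteq> 0"
  shows "invertible M" "trace (matrix_inv M) = (\<Sum>l\<in>UNIV. 1 / mu $ l)"
proof -
  define N where "N = Q ** diag_mat (\<chi> l. 1 / mu $ l) ** transpose Q"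
  have "diag_mat mu ** diag_mat (\<chi> l. 1 / mu $ l) = mat 1"
    using mu by (simp add: vec_eq_iff diag_mat_matrix_mult_nth) (simp add: diag_mat_def mat_def)
  hence "M ** N = Q ** transpose Q"
    by (simp add: N_def matrix_mul_assoc MQ) (simp flip: matrix_mul_assoc)
  hence MN: "M ** N = mat 1" using Q by (simp add: orthogonal_matrix_def)
  thus "invertible M" using invertible_right_inverse by blast
  show "trace (matrix_inv M) = (\<Sum>l\<in>UNIV. 1 / mu $ l)"
    using trace_orthogonal_conj_diag_mat[OF Q] by (simp add: matrix_inv_unique[OF MN] N_def)
qed

lemma orthogonal_matrix_column_inner:
  "orthogonal_matrix (Q::real^'n::finite^'n) \<Longrightarrow> column k Q \<bullet> column l Q = (if k = l then 1 else 0)"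
  by (auto simp: orthogonal_matrix_orthonormal_columns orthogonal_def norm_eq_1)

lemma column_eigenvector: "S ** Q = Q ** diag_mat lam \<Longrightarrow> S *v column l Q = lam $ l *\<^sub>R column l Q"
  by (metis column_matrix_mult column_matrix_mult_diag_mat)

lemma rank_one_deflation_diagonalization:
  fixes S Q :: "real^'n::finite^'n"
  assumes Q: "orthogonal_matrix Q" and SQ: "S ** Q = Q ** diag_mat lam"
    and Qk: "column k Q = u" and lamk: "lam $ k = 1"
  shows "(mat 1 - S + outer u u) ** Q = Q ** diag_mat (\<chi> l. if l = k then 1 else 1 - lam $ l)"
proof -
  have "(mat 1 - S + outer u u) *v column l Q = (if l = k then 1 else 1 - lam $ l) *\<^sub>R column l Q" for l
    using column_eigenvector[OF SQ, of l] orthogonal_matrix_column_inner[OF Q, of k l] Qk lamk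
    by (auto simp: matrix_vector_mult_diff_rdistrib matrix_vector_mult_add_rdistrib outer_mult_vec
        algebra_simps)
  thus ?thesis
    unfolding matrix_eq_columns column_matrix_mult_diag_mat by (simp add: column_matrix_mult)
qed

lemma kemeny_orthogonally_similar_diag_mat:
  fixes S Q U V :: "real^'n::finite^'n"
  assumes UV: "U ** V = mat 1" and Q: "orthogonal_matrix Q" and SQ: "S ** Q = Q ** diag_mat lam"
    and k: "lam $ k = 1"
  shows "kemeny (U ** S ** V) = complex_of_real (\<Sum>l\<in>UNIV - {k}. 1 / (1 - lam $ l))"
proof -
  have QQt: "Q ** transpose Q = mat 1" using Q by (simp add: orthogonal_matrix_def)
  have "U ** S ** V = U ** (S ** Q) ** transpose Q ** V" by (simp add: QQt flip: matrix_mul_assoc)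
  hence "U ** S ** V = (U ** Q) ** diag_mat lam ** (transpose Q ** V)" by (simp add: SQ matrix_mul_assoc)
  moreover have "(U ** Q) ** (transpose Q ** V) = U ** (Q ** transpose Q) ** V"
    by (simp add: matrix_mul_assoc)
  hence "(U ** Q) ** (transpose Q ** V) = mat 1" by (simp add: QQt UV)
  ultimately show ?thesis using kemeny_similar_diag_mat[OF _ k] by simp
qed

lemma kemeny_symmetrizable:
  fixes S U V :: "real^'n::finite^'n"
  assumes sym: "transpose S = S" and u: "norm u = 1" "S *v u = u"
    and simple: "\<And>y. S *v y = y \<Longrightarrow> y \<bullet> u = 0 \<Longrightarrow> y = 0"
    and UV: "U ** V = mat 1"
  shows "invertible (mat 1 - S + outer u u)"
    "kemeny (U ** S ** V) = complex_of_real (trace (matrix_inv (mat 1 - S + outer u u)) - 1)"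
proof -
  obtain Q lam k where Q: "orthogonal_matrix Q" and SQ: "S ** Q = Q ** diag_mat lam"
      and Qk: "column k Q = u" and lamk: "lam $ k = 1"
    using symmetric_matrix_diagonalization[OF sym u(1)] u(2) by (metis scaleR_one)
  have lam_ne_1: "lam $ l \<noteq> 1" if "l \<noteq> k" for l
  proof
    assume "lam $ l = 1"
    hence "column l Q = 0"
      using simple column_eigenvector[OF SQ, of l] orthogonal_matrix_column_inner[OF Q, of l k] Qk that
      by simp
    thus False using orthogonal_matrix_column_inner[OF Q, of l l] by simp
  qed
  define mu where "mu = (\<chi> l. if l = k then 1 else 1 - lam $ l)"
  have mu: "mu $ l \<noteq> 0" for l using lam_ne_1 by (simp add: mu_def)
  have M: "invertible (mat 1 - S + outer u u)"
      "trace (matrix_inv (mat 1 - S + outer u u)) = (\<Sum>l\<in>UNIV. 1 / mu $ l)"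
    using orthogonal_diagonalization_inverse[OF Q rank_one_deflation_diagonalization[OF Q SQ Qk lamk]]
      mu by (simp_all add: mu_def)
  show "invertible (mat 1 - S + outer u u)" by (fact M(1))
  have "(\<Sum>l\<in>UNIV - {k}. 1 / (1 - lam $ l)) = (\<Sum>l\<in>UNIV - {k}. 1 / mu $ l)"
    by (intro sum.cong) (auto simp: mu_def)
  also have "\<dots> = (\<Sum>l\<in>UNIV. 1 / mu $ l) - 1"
    using sum.remove[of UNIV k "\<lambda>l. 1 / mu $ l"] by (simp add: mu_def)
  finally show "kemeny (U ** S ** V) = complex_of_real (trace (matrix_inv (mat 1 - S + outer u u)) - 1)"
    using kemeny_orthogonally_similar_diag_mat[OF UV Q SQ lamk] M(2) by simp
qed

section \<open>Random walk on a connected graph\<close>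

definition inv_sqrt_deg_mat :: "real^'n^'n \<Rightarrow> real^'n::finite^'n" where
  "inv_sqrt_deg_mat B = diag_mat (\<chi> k. inverse (sqrt (degvec B $ k)))"

definition sqrt_deg_mat :: "real^'n^'n \<Rightarrow> real^'n::finite^'n" where
  "sqrt_deg_mat B = diag_mat (\<chi> k. sqrt (degvec B $ k))"

definition normalized_adjacency :: "real^'n^'n \<Rightarrow> real^'n::finite^'n" where
  "normalized_adjacency B = inv_sqrt_deg_mat B ** B ** inv_sqrt_deg_mat B"

definition perron_vec :: "real^'n^'n \<Rightarrow> real^'n::finite" where
  "perron_vec B = (\<chi> k. sqrt (degvec B $ k) / sqrt (\<Sum>l\<in>UNIV. degvec B $ l))"

definition sym_fundamental_inv :: "real^'n^'n \<Rightarrow> real^'n::finite^'n" where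
  "sym_fundamental_inv B = mat 1 - normalized_adjacency B
     + (1 / (\<Sum>k\<in>UNIV. degvec B $ k)) *\<^sub>R (sqrt_deg_mat B ** outer ones ones ** sqrt_deg_mat B)"

lemma degvec_nth: "degvec B $ k = (\<Sum>l\<in>UNIV. B $ k $ l)"
  by (simp add: degvec_def matrix_vector_mult_def ones_def)

lemma normalized_adjacency_nth:
  "normalized_adjacency B $ k $ l = B $ k $ l / (sqrt (degvec B $ k) * sqrt (degvec B $ l))"
  by (simp add: normalized_adjacency_def inv_sqrt_deg_mat_def diag_mat_matrix_mult_nth
      matrix_mult_diag_mat_nth
      field_simps)

lemma transpose_normalized_adjacency:
  "transpose B = B \<Longrightarrow> transpose (normalized_adjacency B) = normalized_adjacency B"
  by (simp add: normalized_adjacency_def matrix_transpose_mul inv_sqrt_deg_mat_def matrix_mul_assoc)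

lemma sym_fundamental_inv_eq:
  assumes dpos: "\<And>k. degvec B $ k > 0"
  shows "sym_fundamental_inv B = mat 1 - normalized_adjacency B + outer (perron_vec B) (perron_vec B)"
proof -
  have "(\<Sum>k\<in>UNIV. degvec B $ k) > 0" by (simp add: dpos sum_pos)
  thus ?thesis
    by (simp add: vec_eq_iff sym_fundamental_inv_def sqrt_deg_mat_def perron_vec_def outer_def ones_def
        diag_mat_matrix_mult_nth matrix_mult_diag_mat_nth real_sqrt_mult[symmetric])
qed

lemma norm_perron_vec:
  assumes dpos: "\<And>k. degvec B $ k > 0"
  shows "norm (perron_vec B) = 1"
proof -
  have s: "(\<Sum>k\<in>UNIV. degvec B $ k) > 0" by (simp add: dpos sum_pos)
  have "perron_vec B \<bullet> perron_vec B = (\<Sum>k\<in>UNIV. degvec B $ k / (\<Sum>k\<in>UNIV. degvec B $ k))"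
    using dpos s by (simp add: perron_vec_def inner_vec_def less_imp_le)
  thus ?thesis using s by (simp add: norm_eq_1 flip: sum_divide_distrib)
qed

lemma normalized_adjacency_perron_vec:
  assumes dpos: "\<And>k. degvec B $ k > 0"
  shows "normalized_adjacency B *v perron_vec B = perron_vec B"
proof -
  have "(normalized_adjacency B *v perron_vec B) $ k = perron_vec B $ k" for k
  proof -
    define c where "c = sqrt (degvec B $ k) * sqrt (\<Sum>l\<in>UNIV. degvec B $ l)"
    have dnz: "degvec B $ l \<noteq> 0" for l using dpos[of l] by simp
    have "(normalized_adjacency B *v perron_vec B) $ k = (\<Sum>l\<in>UNIV. B $ k $ l) / c"
      unfolding matrix_vector_mult_def vec_lambda_beta sum_divide_distrib
      by (intro sum.cong) (simp_all add: normalized_adjacency_nth perron_vec_def c_def dnz)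
    also have "\<dots> = sqrt (degvec B $ k) * sqrt (degvec B $ k) / c"
      using dpos[of k] by (simp add: degvec_nth)
    also have "\<dots> = perron_vec B $ k"
      unfolding c_def perron_vec_def vec_lambda_beta mult_divide_mult_cancel_left_if
      using dpos[of k] by simp
    finally show ?thesis .
  qed
  thus ?thesis by (simp add: vec_eq_iff)
qed

lemma harmonic_vector_constant:
  fixes B :: "real^'n::finite^'n"
  assumes nonneg: "\<And>k l. B $ k $ l \<ge> 0" and conn: "graph_connected B"
    and harm: "\<And>k. (B *v f) $ k = degvec B $ k * f $ k"
  shows "f $ k = f $ l"
proof -
  define m where "m = Max (range (\<lambda>k. f $ k))"
  have "m \<in> range (\<lambda>k. f $ k)" unfolding m_def by (rule Max_in) simp_all
  then obtain k0 where k0: "f $ k0 = m" by blast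
  have le: "f $ k \<le> m" for k by (simp add: m_def)
  \<comment> \<open>maximum principle: the maximum propagates along every edge\<close>
  have "f $ l = m" if "(k0, l) \<in> (edge_rel B)\<^sup>*" for l
    using that
  proof (induction rule: rtrancl_induct)
    case (step a b)
    have "(\<Sum>l\<in>UNIV. B $ a $ l * (m - f $ l)) = degvec B $ a * m - (B *v f) $ a"
      by (simp add: degvec_nth matrix_vector_mult_def algebra_simps sum_subtractf sum_distrib_left)
    also have "\<dots> = 0" using harm[of a] step.IH by simp
    finally have "\<forall>l\<in>UNIV. B $ a $ l * (m - f $ l) = 0"
      using nonneg le by (subst sum_nonneg_eq_0_iff[symmetric]) simp_all
    hence "B $ a $ b * (m - f $ b) = 0" by blast
    moreover have "B $ a $ b > 0" using step.hyps(2) by (simp add: edge_rel_def)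
    ultimately show ?case by simp
  qed (use k0 in simp)
  thus ?thesis using conn by (simp add: graph_connected_def)
qed

lemma normalized_adjacency_eigenvalue_one_simple:
  fixes B :: "real^'n::finite^'n"
  assumes nonneg: "\<And>k l. B $ k $ l \<ge> 0" and conn: "graph_connected B"
    and dpos: "\<And>k. degvec B $ k > 0"
    and y: "normalized_adjacency B *v y = y" "y \<bullet> perron_vec B = 0"
  shows "y = 0"
proof -
  define f where "f = (\<chi> l. y $ l / sqrt (degvec B $ l))"
  have dabs: "\<bar>degvec B $ k\<bar> = degvec B $ k" for k
    using dpos[of k] by simp
  \<comment> \<open>f = D^(-1/2) y is harmonic, hence constant, so y is a multiple of the Perron vector\<close>
  have "(B *v f) $ k = degvec B $ k * f $ k" for k
  proof -
    have "y $ k = (normalized_adjacency B *v y) $ k" using y(1) by simp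
    also have "\<dots> = (B *v f) $ k / sqrt (degvec B $ k)"
      unfolding matrix_vector_mult_def vec_lambda_beta sum_divide_distrib
      by (intro sum.cong) (simp_all add: normalized_adjacency_nth f_def)
    finally have "(B *v f) $ k = sqrt (degvec B $ k) * y $ k"
      using dpos[of k] by (simp add: field_simps)
    also have "\<dots> = (degvec B $ k / sqrt (degvec B $ k)) * y $ k"
      using dpos[of k] by (simp add: real_div_sqrt)
    finally show ?thesis by (simp add: f_def)
  qed
  hence const: "f $ l = f $ k" for k l by (rule harmonic_vector_constant[OF nonneg conn])
  define c where "c = f $ undefined"
  have yl: "y $ l = c * sqrt (degvec B $ l)" for l
    using const[of l undefined] dpos[of l] by (simp add: c_def f_def field_simps)
  have "0 = y \<bullet> perron_vec B" using y(2) by simp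
  also have "\<dots> = c * (\<Sum>l\<in>UNIV. degvec B $ l) / sqrt (\<Sum>l\<in>UNIV. degvec B $ l)"
    by (simp add: inner_vec_def perron_vec_def yl sum_distrib_left sum_divide_distrib mult.assoc dabs)
  moreover have "(\<Sum>l\<in>UNIV. degvec B $ l) > 0" by (simp add: dpos sum_pos)
  ultimately have "c = 0" by simp
  thus ?thesis by (simp add: vec_eq_iff yl)
qed

lemma inv_sqrt_deg_mat_mult_sqrt_deg_mat:
  assumes dpos: "\<And>k. degvec B $ k > 0"
  shows "inv_sqrt_deg_mat B ** sqrt_deg_mat B = mat 1"
proof -
  have "sqrt (degvec B $ k) \<noteq> 0" for k using dpos[of k] by simp
  thus ?thesis
    by (simp add: vec_eq_iff inv_sqrt_deg_mat_def sqrt_deg_mat_def diag_mat_matrix_mult_nth)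
      (simp add: diag_mat_def mat_def)
qed

lemma transition_matrix_similar_normalized_adjacency:
  assumes dpos: "\<And>k. degvec B $ k > 0"
  shows "diag_mat (\<chi> k. inverse (degvec B $ k)) ** B
    = inv_sqrt_deg_mat B ** normalized_adjacency B ** sqrt_deg_mat B"
proof -
  have "sqrt (degvec B $ k) \<noteq> 0" "\<bar>degvec B $ k\<bar> = degvec B $ k" for k
    using dpos[of k] by simp_all
  thus ?thesis
    by (simp add: vec_eq_iff sqrt_deg_mat_def inv_sqrt_deg_mat_def normalized_adjacency_nth
        diag_mat_matrix_mult_nth
        matrix_mult_diag_mat_nth field_simps)
qed

lemma kemeny_transition_matrix:
  fixes B :: "real^'n::finite^'n"
  assumes sym: "transpose B = B" and nonneg: "\<And>k l. B $ k $ l \<ge> 0"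
    and dpos: "\<And>k. degvec B $ k > 0" and conn: "graph_connected B"
  shows "invertible (sym_fundamental_inv B)"
    "kemeny (diag_mat (\<chi> k. inverse (degvec B $ k)) ** B)
       = complex_of_real (trace (matrix_inv (sym_fundamental_inv B)) - 1)"
  using kemeny_symmetrizable[OF transpose_normalized_adjacency[OF sym] norm_perron_vec[OF dpos]
      normalized_adjacency_perron_vec[OF dpos]
      normalized_adjacency_eigenvalue_one_simple[OF nonneg conn dpos]
      inv_sqrt_deg_mat_mult_sqrt_deg_mat[OF dpos]]
  by (simp_all add: sym_fundamental_inv_eq[OF dpos]
      transition_matrix_similar_normalized_adjacency[OF dpos])

section \<open>Rank-one updates\<close>

lemma trace_matrix_inv_rank_one_update:
  fixes M :: "real^'n::finite^'n"
  assumes M: "invertible M" and M': "invertible (M - a *\<^sub>R outer x x)"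
  shows "trace (matrix_inv (M - a *\<^sub>R outer x x)) - trace (matrix_inv M)
    = a * (x \<bullet> ((matrix_inv M ** matrix_inv (M - a *\<^sub>R outer x x)) *v x))"
proof -
  let ?N = "matrix_inv M" and ?N' = "matrix_inv (M - a *\<^sub>R outer x x)"
  have "trace ?N' - trace ?N = trace (?N' ** (a *\<^sub>R outer x x) ** ?N)"
    by (simp add: matrix_inv_diff[OF M M'] flip: trace_sub)
  also have "\<dots> = a * trace (?N' ** (outer x x ** ?N))"
    by (simp add: matrix_scalar_ac trace_scaleR matrix_mul_assoc flip: scalar_matrix_assoc)
  also have "\<dots> = a * trace (outer x x ** (?N ** ?N'))"
    by (metis trace_mul_sym matrix_mul_assoc)
  finally show ?thesis by (simp add: trace_outer_mult)
qed

lemma rank_one_update_denominator_nonzero: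
  fixes M :: "real^'n::finite^'n"
  assumes M: "invertible M" and M': "invertible (M - a *\<^sub>R outer x x)"
  shows "1 - a * (x \<bullet> (matrix_inv M *v x)) \<noteq> 0"
proof
  assume h: "1 - a * (x \<bullet> (matrix_inv M *v x)) = 0"
  have "M *v (matrix_inv M *v x) = x"
    by (simp add: matrix_vector_mul_assoc matrix_inv_inverse[OF M])
  hence "(M - a *\<^sub>R outer x x) *v (matrix_inv M *v x) = (1 - a * (x \<bullet> (matrix_inv M *v x))) *\<^sub>R x"
    by (simp add: matrix_vector_mult_diff_rdistrib outer_mult_vec algebra_simps
        flip: scaleR_matrix_vector_assoc)
  hence "matrix_inv M *v x = 0" using h invertible_mult_vec_eq_0[OF M'] by simp
  hence "x \<bullet> (matrix_inv M *v x) = 0" by simp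
  thus False using h by simp
qed

lemma sherman_morrison:
  fixes M :: "real^'n::finite^'n"
  defines "N \<equiv> matrix_inv M"
  assumes M: "invertible M" and nz: "1 - a * (x \<bullet> (N *v x)) \<noteq> 0"
  shows "matrix_inv (M - a *\<^sub>R outer x x)
    = N + (a / (1 - a * (x \<bullet> (N *v x)))) *\<^sub>R (N ** outer x x ** N)"
proof (rule matrix_inv_unique)
  define \<beta> where "\<beta> = x \<bullet> (N *v x)"
  define c where "c = a / (1 - a * \<beta>)"
  have c: "c - a - a * c * \<beta> = 0" using nz by (simp add: c_def \<beta>_def field_simps)
  have MN: "M *v (N *v y) = y" for y
    using matrix_inv_inverse[OF M] by (simp add: N_def matrix_vector_mul_assoc)
  have "(M - a *\<^sub>R outer x x) ** (N + c *\<^sub>R (N ** outer x x ** N)) *v w = w" for w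
  proof -
    define \<gamma> where "\<gamma> = x \<bullet> (N *v w)"
    have "(N + c *\<^sub>R (N ** outer x x ** N)) *v w = N *v w + (c * \<gamma>) *\<^sub>R (N *v x)"
      by (simp add: matrix_vector_mult_add_rdistrib outer_mult_vec \<gamma>_def matrix_vector_mult_scaleR
          flip: matrix_vector_mul_assoc scaleR_matrix_vector_assoc)
    hence "(M - a *\<^sub>R outer x x) ** (N + c *\<^sub>R (N ** outer x x ** N)) *v w
        = w + (c * \<gamma>) *\<^sub>R x - (a * (\<gamma> + c * \<gamma> * \<beta>)) *\<^sub>R x"
      by (simp add: matrix_vector_mult_diff_rdistrib outer_mult_vec matrix_vector_right_distrib
          matrix_vector_mult_scaleR inner_add_right \<gamma>_def \<beta>_def MN algebra_simps
          flip: matrix_vector_mul_assoc scaleR_matrix_vector_assoc)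
    also have "\<dots> = w + (\<gamma> * (c - a - a * c * \<beta>)) *\<^sub>R x" by (simp add: algebra_simps)
    finally show ?thesis using c by simp
  qed
  thus "(M - a *\<^sub>R outer x x) ** (N + (a / (1 - a * (x \<bullet> (N *v x)))) *\<^sub>R (N ** outer x x ** N)) = mat 1"
    by (simp add: matrix_eq c_def \<beta>_def)
qed

section \<open>Replacing an edge by loops\<close>

lemma unit_vec_inner_ones: "unit_vec k \<bullet> ones = 1"
  by (simp add: unit_vec_def ones_def inner_vec_def)

lemma degvec_add_outer:
  "v \<bullet> ones = 0 \<Longrightarrow> degvec (A + c *\<^sub>R outer v v) = degvec (A::real^'n::finite^'n)"
  by (simp add: degvec_def matrix_vector_mult_add_rdistrib outer_mult_vec
      flip: scaleR_matrix_vector_assoc)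

lemma transpose_add_outer:
  "transpose A = A \<Longrightarrow> transpose (A + c *\<^sub>R outer v v) = A + c *\<^sub>R outer v (v::real^'n::finite)"
  by (simp add: vec_eq_iff transpose_def outer_def mult.commute)

lemma add_outer_edge_eq_delete_edge:
  fixes A :: "real^'n::finite^'n"
  assumes sym: "transpose A = A" and ij: "i \<noteq> j"
  shows "A + A $ i $ j *\<^sub>R outer (unit_vec i - unit_vec j) (unit_vec i - unit_vec j)
    = delete_edge A i j + A $ i $ j *\<^sub>R diag_mat (unit_vec i + unit_vec j)"
proof -
  have "A $ j $ i = A $ i $ j" using sym by (metis transpose_def vec_lambda_beta)
  thus ?thesis using ij
    by (simp add: vec_eq_iff outer_def unit_vec_def delete_edge_def diag_mat_def)
qed

lemma graph_connected_mono:
  assumes "graph_connected B" and "\<And>k l. B $ k $ l > 0 \<Longrightarrow> C $ k $ l > 0"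
  shows "graph_connected C"
proof -
  have "edge_rel B \<subseteq> edge_rel C" using assms(2) by (auto simp: edge_rel_def)
  hence "(edge_rel B)\<^sup>* \<subseteq> (edge_rel C)\<^sup>*" by (rule rtrancl_mono)
  thus ?thesis using assms(1) unfolding graph_connected_def by blast
qed

lemma sym_fundamental_inv_add_outer:
  assumes "v \<bullet> ones = 0"
  shows "sym_fundamental_inv (A + c *\<^sub>R outer v v)
    = sym_fundamental_inv A - c *\<^sub>R (inv_sqrt_deg_mat A ** outer v v ** inv_sqrt_deg_mat A)"
  using degvec_add_outer[OF assms, of A c]
  by (simp add: sym_fundamental_inv_def normalized_adjacency_def inv_sqrt_deg_mat_def sqrt_deg_mat_def
      matrix_add_ldistrib matrix_add_rdistrib matrix_scalar_ac flip: scalar_matrix_assoc)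

lemma edge_replaced_by_loops:
  fixes A :: "real^'n::finite^'n"
  assumes sym: "transpose A = A" and nonneg: "\<And>k l. A $ k $ l \<ge> 0"
    and ij: "i \<noteq> j" and notcut: "\<not> cut_edge A i j"
  defines "v \<equiv> unit_vec i - unit_vec j"
  defines "Ahat \<equiv> A + A $ i $ j *\<^sub>R outer v v"
  shows "transpose Ahat = Ahat" "\<And>k l. Ahat $ k $ l \<ge> 0" "degvec Ahat = degvec A"
    "graph_connected Ahat"
    "sym_fundamental_inv Ahat
       = sym_fundamental_inv A - A $ i $ j *\<^sub>R (inv_sqrt_deg_mat A ** outer v v ** inv_sqrt_deg_mat A)"
proof -
  have loops: "Ahat = delete_edge A i j + A $ i $ j *\<^sub>R diag_mat (unit_vec i + unit_vec j)"
    using add_outer_edge_eq_delete_edge[OF sym ij] by (simp add: Ahat_def v_def)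
  show "transpose Ahat = Ahat" unfolding Ahat_def by (rule transpose_add_outer[OF sym])
  show nonneg_hat: "Ahat $ k $ l \<ge> 0" for k l
    using nonneg by (simp add: loops delete_edge_def diag_mat_def unit_vec_def)
  have "v \<bullet> ones = 0" by (simp add: v_def inner_diff_left unit_vec_inner_ones)
  thus "degvec Ahat = degvec A"
    "sym_fundamental_inv Ahat
       = sym_fundamental_inv A - A $ i $ j *\<^sub>R (inv_sqrt_deg_mat A ** outer v v ** inv_sqrt_deg_mat A)"
    by (simp_all add: Ahat_def degvec_add_outer sym_fundamental_inv_add_outer)
  show "graph_connected Ahat"
    using notcut unfolding cut_edge_def
    by (rule graph_connected_mono[OF notnotD])
      (simp add: loops delete_edge_def diag_mat_def unit_vec_def nonneg add_pos_nonneg)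
qed

theorem theorem9:
  fixes A :: "real^'n::finite^'n" and i j :: 'n
  assumes sym: "transpose A = A"
    and nonneg: "\<And>k l. A $ k $ l \<ge> 0"
    and dpos: "\<And>k. degvec A $ k > 0"
    and conn: "graph_connected A"
    and ij: "i \<noteq> j" and aij: "A $ i $ j > 0"
    and notcut: "\<not> cut_edge A i j"
    and d_def: "d = degvec A"
    and a_def: "a = A $ i $ j"
    and v_def: "v = unit_vec i - unit_vec j"
    and Dinv_def: "Dinv = diag_mat (\<chi> k. inverse (d $ k))"
    and Dmh_def: "Dmh = diag_mat (\<chi> k. inverse (sqrt (d $ k)))"
    and Dh_def: "Dh = diag_mat (\<chi> k. sqrt (d $ k))"
    and P_def: "P = Dinv ** A"
    and Ahat_def: "Ahat = A + a *\<^sub>R outer v v"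
    and Phat_def: "Phat = Dinv ** Ahat"
    and Winv_def: "Winv = mat 1 - Dmh ** A ** Dmh
                 + (1 / (\<Sum>k\<in>UNIV. d $ k)) *\<^sub>R (Dh ** outer ones ones ** Dh)"
    and Whatinv_def: "Whatinv = Winv - a *\<^sub>R (Dmh ** outer v v ** Dmh)"
    and W_def: "W = matrix_inv Winv"
    and What_def: "What = matrix_inv Whatinv"
    and tau_def: "\<tau> = - 1 / (1 - a * (v \<bullet> ((Dmh ** W ** Dmh) *v v)))"
  shows "invertible Winv \<and> invertible Whatinv
    \<and> kemeny Phat - kemeny P = complex_of_real (a * (v \<bullet> ((Dmh ** W ** What ** Dmh) *v v)))
    \<and> 1 - a * (v \<bullet> ((Dmh ** W ** Dmh) *v v)) \<noteq> 0
    \<and> What = W - (\<tau> * a) *\<^sub>R (W ** Dmh ** outer v v ** Dmh ** W)"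
proof -
  have Ahat: "transpose Ahat = Ahat" "\<And>k l. Ahat $ k $ l \<ge> 0" "degvec Ahat = d"
      "graph_connected Ahat"
      "sym_fundamental_inv Ahat = sym_fundamental_inv A - a *\<^sub>R (Dmh ** outer v v ** Dmh)"
    using edge_replaced_by_loops[OF sym nonneg ij notcut]
    by (simp_all add: Ahat_def a_def v_def d_def Dmh_def inv_sqrt_deg_mat_def)
  have Winv_eq: "Winv = sym_fundamental_inv A"
    by (simp add: Winv_def sym_fundamental_inv_def normalized_adjacency_def inv_sqrt_deg_mat_def
        sqrt_deg_mat_def Dmh_def Dh_def d_def)
  hence Whatinv_eq: "Whatinv = sym_fundamental_inv Ahat" by (simp add: Whatinv_def Ahat(5))
  have W: "invertible Winv" "kemeny P = complex_of_real (trace W - 1)"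
    using kemeny_transition_matrix[OF sym nonneg dpos conn]
    by (simp_all add: Winv_eq W_def P_def Dinv_def d_def)
  have What: "invertible Whatinv" "kemeny Phat = complex_of_real (trace What - 1)"
    using kemeny_transition_matrix[OF Ahat(1,2) _ Ahat(4)] dpos
    by (simp_all add: Whatinv_eq What_def Phat_def Dinv_def Ahat(3) d_def)
  define x where "x = Dmh *v v"
  have Dmh: "transpose Dmh = Dmh" by (simp add: Dmh_def)
  have quad: "v \<bullet> ((Dmh ** Z ** Dmh) *v v) = x \<bullet> (Z *v x)" for Z
    unfolding x_def by (rule quadratic_form_congruence[OF Dmh])
  have Whatinv_x: "Whatinv = Winv - a *\<^sub>R outer x x"
    by (simp add: Whatinv_def x_def outer_congruence[OF Dmh])
  have "trace What - trace W = a * (x \<bullet> ((W ** What) *v x))"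
    using trace_matrix_inv_rank_one_update[OF W(1)] What(1) by (simp add: W_def What_def Whatinv_x)
  hence "kemeny Phat - kemeny P = complex_of_real (a * (v \<bullet> ((Dmh ** W ** What ** Dmh) *v v)))"
    using W(2) What(2) quad[of "W ** What"] by (simp add: matrix_mul_assoc flip: of_real_diff)
  moreover have nz: "1 - a * (x \<bullet> (W *v x)) \<noteq> 0"
    using rank_one_update_denominator_nonzero[OF W(1)] What(1) by (simp add: W_def Whatinv_x)
  moreover have "W ** Dmh ** outer v v ** Dmh ** W = W ** outer x x ** W"
    using outer_congruence[OF Dmh] by (simp add: x_def flip: matrix_mul_assoc)
  hence "What = W - (\<tau> * a) *\<^sub>R (W ** Dmh ** outer v v ** Dmh ** W)"
    using sherman_morrison[OF W(1)] nz by (simp add: What_def Whatinv_x W_def tau_def quad)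
  ultimately show ?thesis using W(1) What(1) by (simp add: quad)
qed

end
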